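(* Let $f=\prod_{i=1}^n(y-a_i)\in\overline K[y]$ be reduced ($a_i$ pairwise distinct, $n\ge2$) with $\nu(a_i)>0$ for all $i$. For every $r\in\mathbf Q$ the operator $\nabla$ maps $\overline{\mathcal F}_r$ into itself, and the induced graded map is $\mathrm{gr}_r\nabla=-I-(1+r)(A_{|F})^{-1}$, i.e. for every $w\in\overline{\mathcal F}_r$, $$\mathrm{in}_r(\nabla w)=-\mathrm{in}_r(w)-(1+r)(A_{|F})^{-1}\mathrm{in}_r(w).$$
   Context: $\overline K=\bigcup_{d\ge1}\mathbf C[[x^{1/d}]][1/x]$ with valuation $\nu$; $\partial_x$ and $'$ denote $d/dx$ on $\overline K$ applied coefficientwise. $\overline{\mathcal E}$: polynomials in $y$ over $\overline K$ of degree $<n$, basis $\varepsilon_i=\prod_{j\ne i}(y-a_j)$; $\overline{\mathcal F}=\{\sum u_i\varepsilon_i:\sum u_i=0\}$ (degree $<n-1$). $\mathrm{val}(\sum w_i\varepsilon_i)=\inf\nu(w_i)$; $\overline{\mathcal F}_r=\{w\in\overline{\mathcal F}:\mathrm{val}(w)\ge r\}$; $\mathrm{in}_r(w)\in\mathbf C^n$ is the vector of coefficients of $x^r$ in the $w_i$. For $w\in\overline{\mathcal F}$, the equation $uf'_x+vf'_y=wf$ has a unique solution $(u,v)\in\overline{\mathcal F}\times\overline{\mathcal E}$, and $\nabla w:=-u'_x-v'_y\in\overline{\mathcal F}$. $A$ is the rational matrix with off-diagonal entries $-m_{i,j}$, $m_{i,j}=\nu(a_i-a_j)$, and diagonal entries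 $m_i=\sum_{j\ne i}m_{i,j}$; $F=\{W\in\mathbf C^n:\sum W_i=0\}$; $A_{|F}$ is the (invertible) restriction of $A$ to $F$. *)

theory Defs
  imports "HOL-Computational_Algebra.Computational_Algebra"
begin

(* Puiseux series: an element of \<Union>_d C[[x^(1/d)]][1/x] with a fixed ramification index d
   is represented as a complex Laurent series g(t) in t = x^(1/d), i.e. g(x^(1/d)).
   Indices i range over {..<n} (i.e. 0..n-1). *)

(* d/dx on C((x^(1/d))):  d/dx = 1/(d t^(d-1)) d/dt *)
definition Dx :: "nat \<Rightarrow> complex fls \<Rightarrow> complex fls" where
  "Dx d g = fls_const (1 / of_nat d) * fls_X_intpow (1 - int d) * fls_deriv g"

(* valuation nu (only meaningful for g \<noteq> 0; nu 0 = \<infinity> is handled separately) *)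
definition nu :: "nat \<Rightarrow> complex fls \<Rightarrow> rat" where
  "nu d g = of_int (fls_subdegree g) / of_nat d"

definition xcoeff :: "nat \<Rightarrow> rat \<Rightarrow> complex fls \<Rightarrow> complex" where
  "xcoeff d r g = (if of_int \<lfloor>r * of_nat d\<rfloor> = r * of_nat d then fls_nth g \<lfloor>r * of_nat d\<rfloor> else 0)"

definition fpoly :: "(nat \<Rightarrow> complex fls) \<Rightarrow> nat \<Rightarrow> complex fls poly" where
  "fpoly a n = (\<Prod>j<n. [:- a j, 1:])"

definition eps :: "(nat \<Rightarrow> complex fls) \<Rightarrow> nat \<Rightarrow> nat \<Rightarrow> complex fls poly" where
  "eps a n i = (\<Prod>j\<in>{..<n} - {i}. [:- a j, 1:])"

definition comb :: "(nat \<Rightarrow> complex fls) \<Rightarrow> nat \<Rightarrow> (nat \<Rightarrow> complex fls) \<Rightarrow> complex fls poly" where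
  "comb a n c = (\<Sum>i<n. smult (c i) (eps a n i))"

definition coords :: "(nat \<Rightarrow> complex fls) \<Rightarrow> nat \<Rightarrow> complex fls poly \<Rightarrow> (nat \<Rightarrow> complex fls)" where
  "coords a n p = (THE c. (\<forall>i. n \<le> i \<longrightarrow> c i = 0) \<and> p = comb a n c)"

(* (u,v) in Fbar x Ebar solves u f'_x + v f'_y = w f *)
definition isSol :: "nat \<Rightarrow> (nat \<Rightarrow> complex fls) \<Rightarrow> nat \<Rightarrow> (nat \<Rightarrow> complex fls)
     \<Rightarrow> (nat \<Rightarrow> complex fls) \<Rightarrow> complex fls poly \<Rightarrow> bool" where
  "isSol d a n w u v \<longleftrightarrow>
     (\<forall>i. n \<le> i \<longrightarrow> u i = 0) \<and> (\<Sum>i<n. u i) = 0 \<and> degree v < n \<and>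
     comb a n u * map_poly (Dx d) (fpoly a n) + v * pderiv (fpoly a n) = comb a n w * fpoly a n"

(* nabla w = - u'_x - v'_y, as coordinate vector *)
definition nabla :: "nat \<Rightarrow> (nat \<Rightarrow> complex fls) \<Rightarrow> nat \<Rightarrow> (nat \<Rightarrow> complex fls) \<Rightarrow> (nat \<Rightarrow> complex fls)" where
  "nabla d a n w = (case (THE uv. isSol d a n w (fst uv) (snd uv)) of (u, v) \<Rightarrow>
      coords a n (- map_poly (Dx d) (comb a n u) - pderiv v))"

definition inFr :: "nat \<Rightarrow> nat \<Rightarrow> rat \<Rightarrow> (nat \<Rightarrow> complex fls) \<Rightarrow> bool" where
  "inFr d n r c \<longleftrightarrow> (\<Sum>i<n. c i) = 0 \<and> (\<forall>i<n. c i \<noteq> 0 \<longrightarrow> r \<le> nu d (c i))"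

definition in_r :: "nat \<Rightarrow> nat \<Rightarrow> rat \<Rightarrow> (nat \<Rightarrow> complex fls) \<Rightarrow> (nat \<Rightarrow> complex)" where
  "in_r d n r c = (\<lambda>i. if i < n then xcoeff d r (c i) else 0)"

definition Amat :: "nat \<Rightarrow> (nat \<Rightarrow> complex fls) \<Rightarrow> nat \<Rightarrow> nat \<Rightarrow> nat \<Rightarrow> rat" where
  "Amat d a n i j = (if i = j then (\<Sum>k\<in>{..<n} - {i}. nu d (a i - a k)) else - nu d (a i - a j))"

definition AFinv :: "nat \<Rightarrow> (nat \<Rightarrow> complex fls) \<Rightarrow> nat \<Rightarrow> (nat \<Rightarrow> complex) \<Rightarrow> (nat \<Rightarrow> complex)" where
  "AFinv d a n W = (THE V. (\<forall>i. n \<le> i \<longrightarrow> V i = 0) \<and> (\<Sum>i<n. V i) = 0 \<and>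
       (\<forall>i<n. (\<Sum>j<n. of_rat (Amat d a n i j) * V j) = W i))"

end

theory Submission
  imports Defs "Jordan_Normal_Form.Determinant"
begin

text \<open>
  Write \<open>w = \<Sum> w\<^sub>i \<epsilon>\<^sub>i\<close>. Evaluating \<open>u f'\<^sub>x + v f'\<^sub>y = w f\<close> at \<open>y = a\<^sub>j\<close> forces
  \<open>v = \<Sum> u\<^sub>i a\<^sub>i' \<epsilon>\<^sub>i\<close>, and dividing the rest by \<open>f\<close> leaves the weighted Laplacian system
  \<open>\<Sum>\<^sub>k b\<^sub>j\<^sub>k (u\<^sub>j - u\<^sub>k) = w\<^sub>j\<close> with symmetric weights \<open>b\<^sub>j\<^sub>k = (a\<^sub>j' - a\<^sub>k') / (a\<^sub>j - a\<^sub>k)\<close>; in these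
  coordinates \<open>\<nabla>w = - u' - w\<close>. Since \<open>x b\<^sub>j\<^sub>k = m\<^sub>j\<^sub>k + (higher order)\<close>, the leading part of the
  system is the Laplacian of the positive weights \<open>m\<^sub>j\<^sub>k\<close>, i.e. the matrix \<open>A\<close>, which is injective
  on \<open>F\<close> by the maximum principle. Comparing lowest coefficients therefore shows that \<open>u\<close> has
  valuation at least \<open>r + 1\<close> with \<open>in\<^sub>r\<^sub>+\<^sub>1(u) = A\<^sup>-\<^sup>1 in\<^sub>r(w)\<close>, and differentiation multiplies
  this coefficient by \<open>1 + r\<close>.
\<close>

(* The module scalar multiplication of HOL-Algebra, pulled in by Jordan_Normal_Form, would
   otherwise shadow the polynomial smult. *)
hide_const (open) Module.module.smult

section \<open>Weighted Laplacians\<close>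

definition laplacian :: "nat \<Rightarrow> (nat \<Rightarrow> nat \<Rightarrow> 'a::comm_ring_1) \<Rightarrow> (nat \<Rightarrow> 'a) \<Rightarrow> nat \<Rightarrow> 'a" where
  "laplacian n b c j = (\<Sum>k<n. b j k * (c j - c k))"

definition laplacian_inj :: "nat \<Rightarrow> (nat \<Rightarrow> nat \<Rightarrow> 'a::comm_ring_1) \<Rightarrow> bool" where
  "laplacian_inj n b \<longleftrightarrow>
     (\<forall>c. (\<Sum>k<n. c k) = 0 \<longrightarrow> (\<forall>j<n. laplacian n b c j = 0) \<longrightarrow> (\<forall>j<n. c j = 0))"

lemma laplacian_injD:
  assumes "laplacian_inj n b" "(\<Sum>k<n. c k) = 0" "\<And>j. j < n \<Longrightarrow> laplacian n b c j = 0" "j < n"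
  shows "c j = 0"
  using assms unfolding laplacian_inj_def by blast

lemma laplacian_diff: "laplacian n b (\<lambda>k. c k - c' k) j = laplacian n b c j - laplacian n b c' j"
  by (simp add: laplacian_def sum_subtractf[symmetric] algebra_simps)

lemma laplacian_inj_unique:
  assumes inj: "laplacian_inj n b" and sum: "(\<Sum>k<n. c k) = (\<Sum>k<n. c' k)"
    and eq: "\<forall>j<n. laplacian n b c j = laplacian n b c' j" and j: "j < n"
  shows "c j = c' j"
proof -
  have "(\<Sum>k<n. c k - c' k) = 0" using sum by (simp add: sum_subtractf)
  moreover have "\<forall>j<n. laplacian n b (\<lambda>k. c k - c' k) j = 0" using eq by (simp add: laplacian_diff)
  ultimately have "c j - c' j = 0" using laplacian_injD[OF inj] j by blast
  thus ?thesis by simp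
qed

lemma sum_laplacian_eq_0:
  assumes sym: "\<And>j k. b j k = b k j"
  shows "(\<Sum>j<n. laplacian n b c j) = 0"
proof -
  have "(\<Sum>j<n. laplacian n b c j) = (\<Sum>j<n. \<Sum>k<n. b j k * c j) - (\<Sum>j<n. \<Sum>k<n. b j k * c k)"
    by (simp add: laplacian_def right_diff_distrib sum_subtractf)
  also have "(\<Sum>j<n. \<Sum>k<n. b j k * c k) = (\<Sum>k<n. \<Sum>j<n. b j k * c k)"
    by (rule sum.swap)
  also have "\<dots> = (\<Sum>j<n. \<Sum>k<n. b j k * c j)"
    using sym by simp
  finally show ?thesis by simp
qed

text \<open>
  The matrix \<open>M\<close> below is the Laplacian plus the all-ones matrix; the extra summand
  \<open>\<Sum>\<^sub>k c\<^sub>k\<close> is invisible on sum-zero data but makes \<open>M\<close> injective.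
\<close>

lemma laplacian_surj:
  fixes b :: "nat \<Rightarrow> nat \<Rightarrow> 'a::field_char_0"
  assumes sym: "\<And>j k. b j k = b k j" and n: "n > 0" and inj: "laplacian_inj n b"
    and sum_w: "(\<Sum>j<n. w j) = 0"
  shows "\<exists>c. (\<forall>i. n \<le> i \<longrightarrow> c i = 0) \<and> (\<Sum>k<n. c k) = 0 \<and> (\<forall>j<n. laplacian n b c j = w j)"
proof -
  define M :: "'a mat" where
    "M = mat n n (\<lambda>(j,k). (if j = k then (\<Sum>l<n. b j l) else 0) - b j k + 1)"
  have M_carrier: "M \<in> carrier_mat n n" unfolding M_def by simp
  have M_apply: "(M *\<^sub>v v) $ j = laplacian n b (\<lambda>k. v $ k) j + (\<Sum>k<n. v $ k)"
    if "v \<in> carrier_vec n" "j < n" for v j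
  proof -
    have "(M *\<^sub>v v) $ j = (\<Sum>k<n. ((if j = k then (\<Sum>l<n. b j l) else 0) - b j k + 1) * v $ k)"
      using that M_carrier unfolding M_def
      by (auto simp: scalar_prod_def atLeast0LessThan intro!: sum.cong)
    also have "\<dots> = (\<Sum>k<n. (if j = k then (\<Sum>l<n. b j l) else 0) * v $ k)
        - (\<Sum>k<n. b j k * v $ k) + (\<Sum>k<n. v $ k)"
      by (simp add: algebra_simps sum.distrib sum_subtractf)
    also have "(\<Sum>k<n. (if j = k then (\<Sum>l<n. b j l) else 0) * v $ k) = (\<Sum>l<n. b j l) * v $ j"
    proof -
      have "(\<Sum>k<n. (if j = k then (\<Sum>l<n. b j l) else 0) * v $ k)
          = (\<Sum>k<n. if j = k then (\<Sum>l<n. b j l) * v $ k else 0)"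
        by (rule sum.cong) auto
      thus ?thesis using that by (simp add: sum.delta)
    qed
    finally show ?thesis
      by (simp add: laplacian_def right_diff_distrib sum_subtractf sum_distrib_right)
  qed
  have sum_zero: "(\<Sum>k<n. c k) = 0"
    if "\<forall>j<n. laplacian n b c j + (\<Sum>k<n. c k) = t j" "(\<Sum>j<n. t j) = 0" for c t
  proof -
    have "(\<Sum>j<n. t j) = (\<Sum>j<n. laplacian n b c j + (\<Sum>k<n. c k))"
      using that(1) by simp
    also have "\<dots> = (\<Sum>j<n. laplacian n b c j) + of_nat n * (\<Sum>k<n. c k)"
      by (simp add: sum.distrib)
    moreover have "(\<Sum>j<n. laplacian n b c j) = 0"
      using sum_laplacian_eq_0[where b = b, OF sym] .
    ultimately show ?thesis using that(2) n by simp
  qed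
  have "det M \<noteq> 0"
  proof
    assume "det M = 0"
    then obtain v where v: "v \<in> carrier_vec n" "v \<noteq> 0\<^sub>v n" "M *\<^sub>v v = 0\<^sub>v n"
      using det_0_iff_vec_prod_zero_field[OF M_carrier] by blast
    have ker: "\<forall>j<n. laplacian n b (\<lambda>k. v $ k) j + (\<Sum>k<n. v $ k) = 0"
      using M_apply[OF v(1)] v(3) by (metis index_zero_vec(1))
    have sum_v: "(\<Sum>k<n. v $ k) = 0" using sum_zero[OF ker] by simp
    with ker have "\<forall>j<n. laplacian n b (\<lambda>k. v $ k) j = 0" by simp
    hence "\<forall>j<n. v $ j = 0" using laplacian_injD[OF inj sum_v] by blast
    hence "v = 0\<^sub>v n" using v(1) by (intro eq_vecI) auto
    with v(2) show False by simp
  qed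
  from det_non_zero_imp_unit[OF M_carrier this, of "()"]
  obtain B where B: "B \<in> carrier_mat n n" "M * B = 1\<^sub>m n"
    unfolding Units_def ring_mat_def by auto
  define v where "v = B *\<^sub>v vec n w"
  have v_carrier: "v \<in> carrier_vec n" unfolding v_def using B by simp
  have "M *\<^sub>v v = vec n w"
    unfolding v_def using B M_carrier by (simp flip: assoc_mult_mat_vec)
  define c where "c k = (if k < n then v $ k else 0)" for k
  have Mc: "\<forall>j<n. laplacian n b c j + (\<Sum>k<n. c k) = w j"
    using M_apply[OF v_carrier] \<open>M *\<^sub>v v = vec n w\<close>
    unfolding c_def laplacian_def by simp
  show ?thesis
    using sum_zero[OF Mc sum_w] Mc by (intro exI[of _ c]) (auto simp: c_def)
qed

text \<open>Maximum principle: at a maximum of \<open>x\<close> every term of the Laplacian is nonnegative.\<close>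

lemma laplacian_kernel_const:
  fixes x :: "nat \<Rightarrow> real"
  assumes pos: "\<forall>j<n. \<forall>k<n. j \<noteq> k \<longrightarrow> b j k > 0"
    and ker: "\<forall>j<n. laplacian n b x j = 0" and "j < n" "k < n"
  shows "x j = x k"
proof -
  have "Max (x ` {..<n}) \<in> x ` {..<n}" using \<open>j < n\<close> by (intro Max_in) auto
  then obtain j0 where j0: "j0 < n" "x j0 = Max (x ` {..<n})" by auto
  have b_pos: "0 < b j0 k" if "k < n" "k \<noteq> j0" for k
    using pos j0(1) that by auto
  have x_le: "x k \<le> x j0" if "k < n" for k
    using j0(2) that by simp
  have terms_nonneg: "0 \<le> b j0 k * (x j0 - x k)" if "k \<in> {..<n}" for k
    using b_pos[of k] x_le[of k] that by (cases "k = j0") auto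
  have "(\<Sum>k<n. b j0 k * (x j0 - x k)) = 0" using ker j0(1) by (simp add: laplacian_def)
  hence terms_zero: "b j0 k * (x j0 - x k) = 0" if "k < n" for k
    using sum_nonneg_0[OF finite_lessThan terms_nonneg] that by simp
  have "x k = x j0" if "k < n" for k
  proof (cases "k = j0")
    case False
    with b_pos that have "b j0 k \<noteq> 0" by force
    with terms_zero[OF that] show ?thesis by simp
  qed simp
  thus ?thesis using assms(3,4) by simp
qed

lemma laplacian_inj_pos_weights:
  fixes b :: "nat \<Rightarrow> nat \<Rightarrow> real"
  assumes pos: "\<forall>j<n. \<forall>k<n. j \<noteq> k \<longrightarrow> b j k > 0"
  shows "laplacian_inj n (\<lambda>j k. complex_of_real (b j k))"
  unfolding laplacian_inj_def
proof (intro allI impI)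
  fix c :: "nat \<Rightarrow> complex" and j
  assume sum_c: "(\<Sum>k<n. c k) = 0" and ker: "\<forall>j<n. laplacian n (\<lambda>j k. of_real (b j k)) c j = 0"
    and j: "j < n"
  have real_zero: "x j = 0"
    if "\<forall>j<n. laplacian n b x j = 0" "(\<Sum>k<n. x k) = 0" for x :: "nat \<Rightarrow> real"
  proof -
    have "(\<Sum>k<n. x k) = (\<Sum>k<n. x j)"
      using laplacian_kernel_const[OF pos that(1) j] by (intro sum.cong) auto
    thus ?thesis using that(2) j by simp
  qed
  have "laplacian n b (\<lambda>k. Re (c k)) j = Re (laplacian n (\<lambda>j k. of_real (b j k)) c j)"
    and "laplacian n b (\<lambda>k. Im (c k)) j = Im (laplacian n (\<lambda>j k. of_real (b j k)) c j)" for j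
    by (simp_all add: laplacian_def Re_sum Im_sum)
  with ker have "\<forall>j<n. laplacian n b (\<lambda>k. Re (c k)) j = 0" "\<forall>j<n. laplacian n b (\<lambda>k. Im (c k)) j = 0"
    by simp_all
  moreover have "(\<Sum>k<n. Re (c k)) = 0" "(\<Sum>k<n. Im (c k)) = 0"
    using sum_c by (simp_all flip: Re_sum Im_sum)
  ultimately show "c j = 0"
    using real_zero[of "\<lambda>k. Re (c k)"] real_zero[of "\<lambda>k. Im (c k)"] by (simp add: complex_eq_iff)
qed

section \<open>Laurent series vanishing below a given order\<close>

definition vanishes_below :: "int \<Rightarrow> 'a::zero fls \<Rightarrow> bool" where
  "vanishes_below N f \<longleftrightarrow> (\<forall>k<N. fls_nth f k = 0)"

lemma vanishes_below_zero [simp]: "vanishes_below N 0"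
  by (simp add: vanishes_below_def)

lemma vanishes_below_mono: "vanishes_below N f \<Longrightarrow> M \<le> N \<Longrightarrow> vanishes_below M f"
  by (simp add: vanishes_below_def)

lemma vanishes_below_diff:
  "vanishes_below N f \<Longrightarrow> vanishes_below N g \<Longrightarrow> vanishes_below N (f - g :: 'a::ab_group_add fls)"
  by (simp add: vanishes_below_def)

lemma vanishes_below_uminus: "vanishes_below N f \<Longrightarrow> vanishes_below N (- f :: 'a::group_add fls)"
  by (simp add: vanishes_below_def)

lemma vanishes_below_iff_le_subdegree:
  "f \<noteq> 0 \<Longrightarrow> vanishes_below N f \<longleftrightarrow> N \<le> fls_subdegree f"
  by (auto simp: vanishes_below_def intro: fls_subdegree_geI)

lemma vanishes_below_subdegree: "vanishes_below (fls_subdegree f) f"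
  by (simp add: vanishes_below_def)

lemma vanishes_below_mult:
  assumes "vanishes_below M f" "vanishes_below N g"
  shows "vanishes_below (M + N) (f * g :: 'a::semiring_1 fls)"
proof (cases "f = 0 \<or> g = 0")
  case False
  with assms have "M \<le> fls_subdegree f" "N \<le> fls_subdegree g"
    by (simp_all add: vanishes_below_iff_le_subdegree)
  thus ?thesis by (auto simp: vanishes_below_def intro!: fls_times_nth_eq0)
qed auto

lemma eq_0_if_vanishes_below_all:
  assumes "\<And>N. vanishes_below N f" shows "f = 0"
proof (rule ccontr)
  assume "f \<noteq> 0"
  moreover have "fls_nth f (fls_subdegree f) = 0"
    using assms[of "fls_subdegree f + 1"] unfolding vanishes_below_def by (metis less_add_one)
  ultimately show False by simp
qed

lemma fls_nth_X_intpow_mult: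
  "fls_nth (fls_X_intpow m * (f :: 'a::semiring_1 fls)) k = fls_nth f (k - m)"
  by (simp add: fls_X_intpow_times_conv_shift)

lemma le_nu_iff_vanishes_below:
  assumes "d > 0" "f \<noteq> 0"
  shows "r \<le> nu d f \<longleftrightarrow> vanishes_below \<lceil>r * of_nat d\<rceil> f"
proof -
  have "r \<le> nu d f \<longleftrightarrow> r * of_nat d \<le> of_int (fls_subdegree f)"
    using assms(1) by (simp add: nu_def pos_le_divide_eq)
  also have "\<dots> \<longleftrightarrow> \<lceil>r * of_nat d\<rceil> \<le> fls_subdegree f"
    by (simp add: ceiling_le_iff)
  finally show ?thesis using assms(2) by (simp add: vanishes_below_iff_le_subdegree)
qed

lemma inFr_iff_vanishes_below:
  "d > 0 \<Longrightarrow> inFr d n r c \<longleftrightarrow> (\<Sum>i<n. c i) = 0 \<and> (\<forall>i<n. vanishes_below \<lceil>r * of_nat d\<rceil> (c i))"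
  by (auto simp: inFr_def le_nu_iff_vanishes_below)

section \<open>The derivation \<open>d/dx\<close> on Puiseux series\<close>

lemma Dx_nth: "fls_nth (Dx d g) k = of_int (k + int d) / of_nat d * fls_nth g (k + int d)"
proof -
  have "Dx d g = fls_const (1 / of_nat d) * (fls_X_intpow (1 - int d) * fls_deriv g)"
    by (simp add: Dx_def mult.assoc)
  also have "fls_X_intpow (1 - int d) * fls_deriv g = fls_shift (int d - 1) (fls_deriv g)"
    by (subst fls_X_intpow_times_conv_shift) simp
  finally have Dx_eq: "Dx d g = fls_const (1 / of_nat d) * fls_shift (int d - 1) (fls_deriv g)" .
  have "k + (int d - 1) + 1 = k + int d" by simp
  then show ?thesis unfolding Dx_eq fls_mult_const_nth fls_shift_nth fls_deriv_nth by simp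
qed

lemma vanishes_below_Dx: "vanishes_below (N + int d) g \<Longrightarrow> vanishes_below N (Dx d g)"
  by (simp add: vanishes_below_def Dx_nth)

lemma Dx_diff: "Dx d (f - g) = Dx d f - Dx d g"
  by (simp add: Dx_def algebra_simps)

lemma Dx_minus: "Dx d (- f) = - Dx d f"
  by (simp add: Dx_def algebra_simps)

lemma Dx_zero [simp]: "Dx d 0 = 0"
  by (simp add: Dx_def)

lemma Dx_one: "Dx d 1 = 0"
  by (simp add: Dx_def)

lemma Dx_mult: "Dx d (f * g) = Dx d f * g + f * Dx d g"
  by (simp add: Dx_def algebra_simps)

lemma Dx_sum: "Dx d (\<Sum>i\<in>A. f i) = (\<Sum>i\<in>A. Dx d (f i))"
  by (simp add: Dx_def fls_deriv_sum sum_distrib_left)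

text \<open>In the uniformizer \<open>t = x\<^sup>1\<^sup>/\<^sup>d\<close> of the representation, the factor \<open>x\<close> is \<open>t\<^sup>d\<close>.\<close>

lemma x_log_deriv_leading:
  assumes d: "d > 0" and g: "g \<noteq> 0"
  shows "vanishes_below 1 (fls_X_intpow (int d) * (Dx d g / g) - fls_const (of_rat (nu d g)))"
proof -
  define s where "s = fls_subdegree g"
  define e where "e = fls_X_intpow (int d) * (Dx d g / g) - fls_const (of_rat (nu d g))"
  have eg: "e * g = fls_X_intpow (int d) * Dx d g - fls_const (of_rat (nu d g)) * g"
    using g unfolding e_def by (simp add: algebra_simps)
  have nu_eq: "(of_rat (nu d g) :: complex) = of_int s / of_nat d"
    by (simp add: nu_def of_rat_divide s_def)
  have nth: "fls_nth (e * g) k = (of_int k / of_nat d - of_int s / of_nat d) * fls_nth g k" for k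
    unfolding eg using d by (simp add: fls_X_intpow_times_conv_shift Dx_nth nu_eq algebra_simps)
  hence "vanishes_below (s + 1) (e * g)"
  proof (unfold vanishes_below_def, intro allI impI)
    fix k assume "k < s + 1"
    then consider "k < s" | "k = s" by linarith
    then show "fls_nth (e * g) k = 0"
      using nth[of k] by cases (simp_all add: s_def)
  qed
  show ?thesis
    unfolding e_def[symmetric]
  proof (cases "e = 0")
    case False
    with g \<open>vanishes_below (s + 1) (e * g)\<close> have "s + 1 \<le> fls_subdegree e + s"
      by (simp add: vanishes_below_iff_le_subdegree fls_subdegree_mult s_def)
    with False show "vanishes_below 1 e" by (simp add: vanishes_below_iff_le_subdegree)
  qed simp
qed

section \<open>Laplacians with Laurent series weights\<close>

lemma nth_laplacian_leading:
  fixes beta :: "nat \<Rightarrow> nat \<Rightarrow> 'a::comm_ring_1 fls"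
  assumes lead: "\<forall>j<n. \<forall>k<n. vanishes_below 1 (beta j k - fls_const (m j k))"
    and u: "\<forall>k<n. vanishes_below N (u k)" and j: "j < n"
  shows "fls_nth (laplacian n beta u j) N = laplacian n m (\<lambda>k. fls_nth (u k) N) j"
  unfolding laplacian_def fls_nth_sum
proof (rule sum.cong[OF refl])
  fix k assume k: "k \<in> {..<n}"
  define e where "e = beta j k - fls_const (m j k)"
  have "vanishes_below (1 + N) (e * (u j - u k))"
    using lead j k u by (intro vanishes_below_mult vanishes_below_diff) (auto simp: e_def)
  hence "fls_nth (e * (u j - u k)) N = 0" by (simp add: vanishes_below_def)
  moreover have "beta j k = e + fls_const (m j k)" by (simp add: e_def)
  ultimately show "fls_nth (beta j k * (u j - u k)) N = m j k * (fls_nth (u j) N - fls_nth (u k) N)"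
    by (simp add: distrib_right)
qed

lemma laplacian_vanishes_below:
  fixes beta :: "nat \<Rightarrow> nat \<Rightarrow> 'a::comm_ring_1 fls"
  assumes lead: "\<forall>j<n. \<forall>k<n. vanishes_below 1 (beta j k - fls_const (m j k))"
    and inj: "laplacian_inj n m" and sum_u: "(\<Sum>k<n. u k) = 0"
    and lap: "\<forall>j<n. vanishes_below M (laplacian n beta u j)"
  shows "\<forall>k<n. vanishes_below M (u k)"
proof -
  have raise: "\<forall>k<n. vanishes_below (N + 1) (u k)"
    if IH: "\<forall>k<n. vanishes_below N (u k)" and "N < M" for N
  proof -
    have "fls_nth (u k) N = 0" if "k < n" for k
    proof (rule laplacian_injD[OF inj _ _ that])
      show "(\<Sum>k<n. fls_nth (u k) N) = 0" using sum_u by (simp flip: fls_nth_sum)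
    next
      fix j assume "j < n"
      then show "laplacian n m (\<lambda>k. fls_nth (u k) N) j = 0"
        using nth_laplacian_leading[OF lead IH, of j] lap \<open>N < M\<close> by (simp add: vanishes_below_def)
    qed
    with IH show ?thesis
      unfolding vanishes_below_def by (metis zless_add1_eq)
  qed
  define N0 where "N0 = Min (insert 0 ((\<lambda>k. fls_subdegree (u k)) ` {..<n}))"
  have N0: "vanishes_below N0 (u k)" if "k < n" for k
    using that vanishes_below_subdegree
    by (rule_tac vanishes_below_mono) (auto simp: N0_def)
  have "\<forall>k<n. vanishes_below (min i M) (u k)" if "N0 \<le> i" for i
    using that
  proof (induction i rule: int_ge_induct)
    case base
    show ?case using N0 vanishes_below_mono[of N0 _ "min N0 M"] by auto
  next
    case (step i)
    show ?case
    proof (cases "i < M")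
      case True
      with step raise[of i] show ?thesis by simp
    next
      case False
      with step show ?thesis by simp
    qed
  qed
  from this[of "max N0 M"] show ?thesis by simp
qed

lemma laplacian_inj_of_leading:
  fixes beta :: "nat \<Rightarrow> nat \<Rightarrow> 'a::comm_ring_1 fls"
  assumes lead: "\<forall>j<n. \<forall>k<n. vanishes_below 1 (beta j k - fls_const (m j k))"
    and inj: "laplacian_inj n m"
  shows "laplacian_inj n beta"
  unfolding laplacian_inj_def
proof (intro allI impI)
  fix c :: "nat \<Rightarrow> 'a fls" and j
  assume "(\<Sum>k<n. c k) = 0" "\<forall>j<n. laplacian n beta c j = 0" "j < n"
  with laplacian_vanishes_below[OF lead inj] have "vanishes_below N (c j)" for N by simp
  thus "c j = 0" by (rule eq_0_if_vanishes_below_all)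
qed

section \<open>Polynomial identities in the basis \<open>\<epsilon>\<^sub>i\<close>\<close>

lemma smult_sum_right: "smult c (\<Sum>i\<in>A. f i) = (\<Sum>i\<in>A. smult c (f i))"
  by (induct A rule: infinite_finite_induct) (simp_all add: smult_add_right)

lemma pderiv_sum: "pderiv (\<Sum>i\<in>A. f i) = (\<Sum>i\<in>A. pderiv (f i))"
  by (induct A rule: infinite_finite_induct) (simp_all add: pderiv_add)

definition eps2 :: "(nat \<Rightarrow> complex fls) \<Rightarrow> nat \<Rightarrow> nat \<Rightarrow> nat \<Rightarrow> complex fls poly" where
  "eps2 a n i k = (\<Prod>j\<in>{..<n} - {i,k}. [:- a j, 1:])"

abbreviation Dx_poly :: "nat \<Rightarrow> complex fls poly \<Rightarrow> complex fls poly" where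
  "Dx_poly d \<equiv> map_poly (Dx d)"

lemma eps2_sym: "eps2 a n i k = eps2 a n k i"
  unfolding eps2_def by (simp add: insert_commute)

lemma fpoly_eq_factor_eps: "i < n \<Longrightarrow> fpoly a n = [:- a i, 1:] * eps a n i"
  unfolding fpoly_def eps_def by (subst prod.remove[of _ i]) auto

lemma eps_eq_factor_eps2: "i < n \<Longrightarrow> k < n \<Longrightarrow> i \<noteq> k \<Longrightarrow> eps a n i = [:- a k, 1:] * eps2 a n i k"
proof -
  assume h: "i < n" "k < n" "i \<noteq> k"
  have "{..<n} - {i} - {k} = {..<n} - {i,k}" by auto
  thus ?thesis using h unfolding eps_def eps2_def by (subst prod.remove[of _ k]) auto
qed

lemma eps_mult_eps: "i < n \<Longrightarrow> k < n \<Longrightarrow> i \<noteq> k \<Longrightarrow> eps a n i * eps a n k = fpoly a n * eps2 a n i k"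
proof -
  assume h: "i < n" "k < n" "i \<noteq> k"
  have 1: "eps a n i = [:- a k, 1:] * eps2 a n i k" using eps_eq_factor_eps2 h by blast
  have 2: "eps a n k = [:- a i, 1:] * eps2 a n i k" using eps_eq_factor_eps2[of k n i a] h eps2_sym[of a n i k] by simp
  have 3: "fpoly a n = [:- a i, 1:] * eps a n i" using fpoly_eq_factor_eps h by blast
  show ?thesis unfolding 3 1 2 by (simp only: mult.assoc mult.commute mult.left_commute)
qed

lemma eps_diff_eps: "i < n \<Longrightarrow> k < n \<Longrightarrow> i \<noteq> k \<Longrightarrow> eps a n i - eps a n k = smult (a i - a k) (eps2 a n i k)"
proof -
  assume h: "i < n" "k < n" "i \<noteq> k"
  have 1: "eps a n i = [:- a k, 1:] * eps2 a n i k" using eps_eq_factor_eps2 h by blast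
  have 2: "eps a n k = [:- a i, 1:] * eps2 a n i k" using eps_eq_factor_eps2[of k n i a] h eps2_sym[of a n i k] by simp
  have "eps a n i - eps a n k = ([:- a k, 1:] - [:- a i, 1:]) * eps2 a n i k"
    unfolding 1 2 by (simp only: left_diff_distrib)
  also have "[:- a k, 1:] - [:- a i, 1:] = [:a i - a k:]" by simp
  finally show ?thesis by simp
qed

lemma poly_eps_other_root: "i < n \<Longrightarrow> j < n \<Longrightarrow> j \<noteq> i \<Longrightarrow> poly (eps a n i) (a j) = 0"
  unfolding eps_def poly_prod by (rule prod_zero) auto

lemma poly_eps_own_root:
  assumes dist: "\<forall>i<n. \<forall>j<n. i \<noteq> j \<longrightarrow> a i \<noteq> a j" and j: "j < n"
  shows "poly (eps a n j) (a j) \<noteq> 0"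
  unfolding eps_def poly_prod using dist j by (auto simp: prod_zero_iff)

lemma poly_fpoly_root: "j < n \<Longrightarrow> poly (fpoly a n) (a j) = 0"
  by (simp add: fpoly_eq_factor_eps[of j n a])

lemma degree_eps: "i < n \<Longrightarrow> degree (eps a n i) < n"
proof -
  assume i: "i < n"
  have "degree (eps a n i) \<le> (\<Sum>j\<in>{..<n} - {i}. degree [:- a j, 1:])"
    unfolding eps_def using degree_prod_sum_le[of "{..<n} - {i}" "\<lambda>j. [:- a j, 1:]"] by (simp add: o_def)
  also have "\<dots> = card ({..<n} - {i})" by simp
  also have "\<dots> < n" using i by simp
  finally show ?thesis .
qed

lemma degree_comb: "n > 0 \<Longrightarrow> degree (comb a n c) < n"
proof -
  assume n: "n > 0"
  have "degree (comb a n c) \<le> n - 1"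
    unfolding comb_def
  proof (rule degree_sum_le)
    fix i assume "i \<in> {..<n}"
    hence "degree (eps a n i) < n" by (simp add: degree_eps)
    thus "degree (smult (c i) (eps a n i)) \<le> n - 1" using degree_smult_le[of "c i" "eps a n i"] by linarith
  qed simp
  thus ?thesis using n by linarith
qed

lemma poly_comb_root: "j < n \<Longrightarrow> poly (comb a n c) (a j) = c j * poly (eps a n j) (a j)"
proof -
  assume j: "j < n"
  have "poly (comb a n c) (a j) = (\<Sum>i<n. c i * poly (eps a n i) (a j))"
    unfolding comb_def poly_sum by simp
  also have "\<dots> = c j * poly (eps a n j) (a j) + (\<Sum>i\<in>{..<n} - {j}. c i * poly (eps a n i) (a j))"
    using j by (subst sum.remove[of _ j]) auto
  also have "(\<Sum>i\<in>{..<n} - {j}. c i * poly (eps a n i) (a j)) = 0"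
    using j by (intro sum.neutral) (auto simp: poly_eps_other_root)
  finally show ?thesis by simp
qed

lemma comb_inj:
  assumes dist: "\<forall>i<n. \<forall>j<n. i \<noteq> j \<longrightarrow> a i \<noteq> a j" and e: "comb a n c = comb a n c'" and j: "j < n"
  shows "c j = c' j"
  using arg_cong[OF e, of "\<lambda>p. poly p (a j)"] poly_comb_root[OF j] poly_eps_own_root[OF dist j] by simp

lemma pderiv_fpoly: "pderiv (fpoly a n) = comb a n (\<lambda>k. 1)"
  unfolding fpoly_def eps_def comb_def pderiv_prod by (simp add: pderiv_pCons)

lemma pderiv_eps: "i < n \<Longrightarrow> pderiv (eps a n i) = (\<Sum>k\<in>{..<n} - {i}. eps2 a n i k)"
proof -
  assume i: "i < n"
  have "pderiv (eps a n i) = (\<Sum>k\<in>{..<n} - {i}. (\<Prod>j\<in>{..<n} - {i} - {k}. [:- a j, 1:]))"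
    unfolding eps_def pderiv_prod by (simp add: pderiv_pCons)
  also have "\<dots> = (\<Sum>k\<in>{..<n} - {i}. eps2 a n i k)"
    unfolding eps2_def by (intro sum.cong) (auto intro!: prod.cong)
  finally show ?thesis .
qed

lemma coeff_Dx_poly: "coeff (Dx_poly d p) k = Dx d (coeff p k)"
  by (simp add: coeff_map_poly Dx_def)

lemma Dx_poly_sum: "Dx_poly d (\<Sum>i\<in>A. f i) = (\<Sum>i\<in>A. Dx_poly d (f i))"
  by (rule poly_eqI) (simp add: coeff_Dx_poly coeff_sum Dx_sum)

lemma Dx_poly_mult: "Dx_poly d (p * q) = Dx_poly d p * q + p * Dx_poly d q"
proof (rule poly_eqI)
  fix k
  show "coeff (Dx_poly d (p * q)) k = coeff (Dx_poly d p * q + p * Dx_poly d q) k"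
    by (simp add: coeff_Dx_poly coeff_mult Dx_sum Dx_mult sum.distrib)
qed

lemma Dx_poly_const: "Dx_poly d [:c:] = [:Dx d c:]"
  by (rule poly_eqI) (simp add: coeff_Dx_poly coeff_pCons split: nat.split)

lemma Dx_poly_smult: "Dx_poly d (smult c p) = smult (Dx d c) p + smult c (Dx_poly d p)"
proof -
  have "Dx_poly d (smult c p) = Dx_poly d ([:c:] * p)" by simp
  also have "\<dots> = [:Dx d c:] * p + [:c:] * Dx_poly d p" by (simp only: Dx_poly_mult Dx_poly_const)
  finally show ?thesis by simp
qed

lemma Dx_poly_linear: "Dx_poly d [:- c, 1:] = [:- Dx d c:]"
proof (rule poly_eqI)
  fix k show "coeff (Dx_poly d [:- c, 1:]) k = coeff [:- Dx d c:] k"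
  proof (cases k)
    case 0 thus ?thesis by (simp add: coeff_Dx_poly Dx_minus)
  next
    case (Suc m) thus ?thesis by (cases m) (simp_all add: coeff_Dx_poly Dx_one)
  qed
qed

lemma Dx_poly_one: "Dx_poly d 1 = 0"
proof (rule poly_eqI)
  fix k show "coeff (Dx_poly d 1) k = coeff 0 k" by (cases "k = 0") (simp_all add: coeff_Dx_poly Dx_one)
qed

lemma Dx_poly_prod: "Dx_poly d (prod f A) = (\<Sum>x\<in>A. prod f (A - {x}) * Dx_poly d (f x))"
proof (induct A rule: infinite_finite_induct)
  case (infinite A)
  thus ?case by (simp add: Dx_poly_one)
next
  case empty thus ?case by (simp add: Dx_poly_one)
next
  case (insert a as)
  then have id: "prod f (insert a as) = f a * prod f as"
    "\<And>g. sum g (insert a as) = g a + sum g as"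
    "insert a as - {a} = as"
    by auto
  have "prod f (insert a as - {b}) = f a * prod f (as - {b})" if "b \<in> as" for b
  proof -
    from \<open>a \<notin> as\<close> that have *: "insert a as - {b} = insert a (as - {b})"
      by auto
    show ?thesis
      unfolding * by (subst prod.insert) (use insert in auto)
  qed
  then show ?case
    unfolding id Dx_poly_mult insert(3) sum_distrib_left
    by (auto simp add: ac_simps intro!: sum.cong)
qed

lemma Dx_poly_fpoly: "Dx_poly d (fpoly a n) = - comb a n (\<lambda>k. Dx d (a k))"
  unfolding fpoly_def eps_def comb_def Dx_poly_prod Dx_poly_linear
  by (simp add: sum_negf[symmetric])

lemma Dx_poly_eps: "i < n \<Longrightarrow> Dx_poly d (eps a n i) = - (\<Sum>k\<in>{..<n} - {i}. smult (Dx d (a k)) (eps2 a n i k))"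
proof -
  assume i: "i < n"
  have "Dx_poly d (eps a n i) = (\<Sum>k\<in>{..<n} - {i}. (\<Prod>j\<in>{..<n} - {i} - {k}. [:- a j, 1:]) * [:- Dx d (a k):])"
    unfolding eps_def Dx_poly_prod Dx_poly_linear by simp
  also have "\<dots> = - (\<Sum>k\<in>{..<n} - {i}. smult (Dx d (a k)) (eps2 a n i k))"
    unfolding eps2_def sum_negf[symmetric]
    by (intro sum.cong) (auto simp: ac_simps intro!: arg_cong[where f="smult _"] prod.cong)
  finally show ?thesis .
qed

definition cross_term :: "nat \<Rightarrow> (nat \<Rightarrow> complex fls) \<Rightarrow> nat \<Rightarrow> (nat \<Rightarrow> complex fls) \<Rightarrow> complex fls poly" where
  "cross_term d a n u = (\<Sum>i<n. \<Sum>k\<in>{..<n} - {i}. smult (u i * (Dx d (a i) - Dx d (a k))) (eps2 a n i k))"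

definition dlog_diff :: "nat \<Rightarrow> (nat \<Rightarrow> complex fls) \<Rightarrow> nat \<Rightarrow> nat \<Rightarrow> complex fls" where
  "dlog_diff d a j k = (Dx d (a j) - Dx d (a k)) / (a j - a k)"

lemma dlog_diff_sym: "dlog_diff d a j k = dlog_diff d a k j"
  unfolding dlog_diff_def by (metis minus_diff_eq minus_divide_divide)

lemma Dx_poly_fpoly_pderiv_eq_cross_term:
  "comb a n u * Dx_poly d (fpoly a n) + comb a n (\<lambda>k. u k * Dx d (a k)) * pderiv (fpoly a n)
   = fpoly a n * cross_term d a n u"
proof -
  let ?E = "eps a n"
  have A: "comb a n u * Dx_poly d (fpoly a n) = - (\<Sum>i<n. \<Sum>k<n. smult (u i * Dx d (a k)) (?E i * ?E k))"
    unfolding Dx_poly_fpoly comb_def by (simp add: sum_product smult_smult mult.commute)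
  have B: "comb a n (\<lambda>k. u k * Dx d (a k)) * pderiv (fpoly a n) = (\<Sum>i<n. \<Sum>k<n. smult (u i * Dx d (a i)) (?E i * ?E k))"
    unfolding pderiv_fpoly comb_def by (simp add: sum_product smult_smult)
  have C: "(\<Sum>k<n. smult (u i * (Dx d (a i) - Dx d (a k))) (?E i * ?E k)) =
      fpoly a n * (\<Sum>k\<in>{..<n} - {i}. smult (u i * (Dx d (a i) - Dx d (a k))) (eps2 a n i k))"
    if i: "i < n" for i
  proof -
    have "(\<Sum>k<n. smult (u i * (Dx d (a i) - Dx d (a k))) (?E i * ?E k)) =
       smult (u i * (Dx d (a i) - Dx d (a i))) (?E i * ?E i) +
       (\<Sum>k\<in>{..<n} - {i}. smult (u i * (Dx d (a i) - Dx d (a k))) (?E i * ?E k))"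
      using i by (subst sum.remove[of _ i]) auto
    also have "(\<Sum>k\<in>{..<n} - {i}. smult (u i * (Dx d (a i) - Dx d (a k))) (?E i * ?E k)) =
       (\<Sum>k\<in>{..<n} - {i}. fpoly a n * smult (u i * (Dx d (a i) - Dx d (a k))) (eps2 a n i k))"
      using i by (intro sum.cong) (auto simp: eps_mult_eps)
    finally show ?thesis by (simp add: sum_distrib_left)
  qed
  have "comb a n u * Dx_poly d (fpoly a n) + comb a n (\<lambda>k. u k * Dx d (a k)) * pderiv (fpoly a n)
      = (\<Sum>i<n. \<Sum>k<n. smult (u i * (Dx d (a i) - Dx d (a k))) (?E i * ?E k))"
    unfolding A B by (simp add: sum_subtractf[symmetric] right_diff_distrib smult_diff_left)
  also have "\<dots> = (\<Sum>i<n. fpoly a n * (\<Sum>k\<in>{..<n} - {i}. smult (u i * (Dx d (a i) - Dx d (a k))) (eps2 a n i k)))"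
    by (intro sum.cong) (auto simp: C)
  also have "\<dots> = fpoly a n * cross_term d a n u"
    unfolding cross_term_def by (simp add: sum_distrib_left)
  finally show ?thesis .
qed

lemma cross_term_eq_comb_laplacian:
  assumes dist: "\<forall>i<n. \<forall>j<n. i \<noteq> j \<longrightarrow> a i \<noteq> a j"
  shows "cross_term d a n u = comb a n (laplacian n (dlog_diff d a) u)"
proof -
  let ?E = "eps a n"
  have stepA: "(\<Sum>k\<in>{..<n} - {j}. smult (u j * (Dx d (a j) - Dx d (a k))) (eps2 a n j k)) =
      (\<Sum>k<n. smult (dlog_diff d a j k * u j) (?E j - ?E k))" if j: "j < n" for j
  proof -
    have "(\<Sum>k<n. smult (dlog_diff d a j k * u j) (?E j - ?E k)) =
        smult (dlog_diff d a j j * u j) (?E j - ?E j) + (\<Sum>k\<in>{..<n} - {j}. smult (dlog_diff d a j k * u j) (?E j - ?E k))"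
      using j by (subst sum.remove[of _ j]) auto
    also have "(\<Sum>k\<in>{..<n} - {j}. smult (dlog_diff d a j k * u j) (?E j - ?E k)) =
        (\<Sum>k\<in>{..<n} - {j}. smult (u j * (Dx d (a j) - Dx d (a k))) (eps2 a n j k))"
    proof (intro sum.cong refl)
      fix k assume k: "k \<in> {..<n} - {j}"
      hence ne: "a j - a k \<noteq> 0" using dist j by auto
      have eq: "dlog_diff d a j k * u j * (a j - a k) = u j * (Dx d (a j) - Dx d (a k))"
        using ne unfolding dlog_diff_def by (simp add: field_simps)
      have "smult (dlog_diff d a j k * u j) (?E j - ?E k) = smult (dlog_diff d a j k * u j) (smult (a j - a k) (eps2 a n j k))"
        using k j by (simp add: eps_diff_eps)
      also have "\<dots> = smult (dlog_diff d a j k * u j * (a j - a k)) (eps2 a n j k)"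
        by (simp only: smult_smult)
      finally show "smult (dlog_diff d a j k * u j) (?E j - ?E k) = smult (u j * (Dx d (a j) - Dx d (a k))) (eps2 a n j k)"
        unfolding eq .
    qed
    finally show ?thesis by simp
  qed
  have "cross_term d a n u = (\<Sum>j<n. \<Sum>k<n. smult (dlog_diff d a j k * u j) (?E j - ?E k))"
    unfolding cross_term_def by (rule sum.cong[OF refl]) (simp add: stepA)
  also have "\<dots> = (\<Sum>j<n. \<Sum>k<n. smult (dlog_diff d a j k * u j) (?E j)) - (\<Sum>j<n. \<Sum>k<n. smult (dlog_diff d a j k * u j) (?E k))"
    by (simp add: smult_diff_right sum_subtractf)
  also have "(\<Sum>j<n. \<Sum>k<n. smult (dlog_diff d a j k * u j) (?E k)) = (\<Sum>k<n. \<Sum>j<n. smult (dlog_diff d a j k * u j) (?E k))"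
    by (rule sum.swap)
  also have "\<dots> = (\<Sum>j<n. \<Sum>k<n. smult (dlog_diff d a j k * u k) (?E j))"
    by (simp add: dlog_diff_sym)
  also have "(\<Sum>j<n. \<Sum>k<n. smult (dlog_diff d a j k * u j) (?E j)) - (\<Sum>j<n. \<Sum>k<n. smult (dlog_diff d a j k * u k) (?E j))
      = (\<Sum>j<n. \<Sum>k<n. smult (dlog_diff d a j k * (u j - u k)) (?E j))"
    by (simp add: sum_subtractf[symmetric] right_diff_distrib smult_diff_left)
  also have "\<dots> = comb a n (laplacian n (dlog_diff d a) u)"
    by (simp add: comb_def laplacian_def smult_sum)
  finally show ?thesis .
qed

lemma Dx_poly_comb_plus_pderiv:
  "Dx_poly d (comb a n u) + pderiv (comb a n (\<lambda>k. u k * Dx d (a k))) = comb a n (\<lambda>j. Dx d (u j)) + cross_term d a n u"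
proof -
  have P1: "Dx_poly d (comb a n u) = comb a n (\<lambda>j. Dx d (u j)) -
      (\<Sum>i<n. \<Sum>k\<in>{..<n} - {i}. smult (u i * Dx d (a k)) (eps2 a n i k))"
  proof -
    have "Dx_poly d (comb a n u) = comb a n (\<lambda>j. Dx d (u j)) + (\<Sum>i<n. smult (u i) (Dx_poly d (eps a n i)))"
      unfolding comb_def Dx_poly_sum Dx_poly_smult by (simp add: sum.distrib)
    also have "(\<Sum>i<n. smult (u i) (Dx_poly d (eps a n i))) =
        - (\<Sum>i<n. \<Sum>k\<in>{..<n} - {i}. smult (u i * Dx d (a k)) (eps2 a n i k))"
      by (simp add: Dx_poly_eps smult_sum_right smult_smult sum_negf)
    finally show ?thesis by simp
  qed
  have P2: "pderiv (comb a n (\<lambda>k. u k * Dx d (a k))) =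
      (\<Sum>i<n. \<Sum>k\<in>{..<n} - {i}. smult (u i * Dx d (a i)) (eps2 a n i k))"
    unfolding comb_def pderiv_sum pderiv_smult by (simp add: pderiv_eps smult_sum_right smult_smult)
  show ?thesis unfolding P1 P2 cross_term_def
    by (simp add: right_diff_distrib smult_diff_left sum_subtractf)
qed

section \<open>The equation \<open>u f'\<^sub>x + v f'\<^sub>y = w f\<close>\<close>

lemma comb_cong: "(\<And>i. i < n \<Longrightarrow> c i = c' i) \<Longrightarrow> comb a n c = comb a n c'"
  unfolding comb_def by (intro sum.cong) auto

lemma comb_add: "comb a n c + comb a n c' = comb a n (\<lambda>i. c i + c' i)"
  unfolding comb_def by (simp add: sum.distrib smult_add_left)

lemma comb_minus: "- comb a n c = comb a n (\<lambda>i. - c i)"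
  unfolding comb_def by (simp add: sum_negf)

lemma fpoly_neq_0: "fpoly a n \<noteq> 0"
  unfolding fpoly_def by (simp add: prod_zero_iff)

lemma coords_comb:
  assumes dist: "\<forall>i<n. \<forall>j<n. i \<noteq> j \<longrightarrow> a i \<noteq> a j" and supp: "\<forall>i. n \<le> i \<longrightarrow> c i = 0"
  shows "coords a n (comb a n c) = c"
  unfolding coords_def
proof (rule the_equality)
  show "(\<forall>i. n \<le> i \<longrightarrow> c i = 0) \<and> comb a n c = comb a n c" using supp by simp
next
  fix c' assume h: "(\<forall>i. n \<le> i \<longrightarrow> c' i = 0) \<and> comb a n c = comb a n c'"
  show "c' = c"
  proof
    fix i show "c' i = c i"
      using h supp comb_inj[OF dist, of c c' i] by (cases "i < n") auto
  qed
qed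

lemma isSol_iff:
  assumes dist: "\<forall>i<n. \<forall>j<n. i \<noteq> j \<longrightarrow> a i \<noteq> a j" and n: "n > 0"
  shows "isSol d a n w u v \<longleftrightarrow>
    (\<forall>i. n \<le> i \<longrightarrow> u i = 0) \<and> (\<Sum>i<n. u i) = 0 \<and>
    (\<forall>j<n. laplacian n (dlog_diff d a) u j = w j) \<and> v = comb a n (\<lambda>k. u k * Dx d (a k))"
proof
  assume sol: "isSol d a n w u v"
  hence eq: "comb a n u * Dx_poly d (fpoly a n) + v * pderiv (fpoly a n) = comb a n w * fpoly a n"
    by (simp add: isSol_def)
  text \<open>Evaluating the equation at the root \<open>a\<^sub>j\<close> of \<open>f\<close> determines \<open>v(a\<^sub>j)\<close>.\<close>
  have v: "v = comb a n (\<lambda>k. u k * Dx d (a k))"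
  proof (rule poly_eqI_degree[of "a ` {..<n}"])
    fix x assume "x \<in> a ` {..<n}"
    then obtain j where j: "j < n" and x: "x = a j" by auto
    let ?e = "poly (eps a n j) (a j)"
    have "poly (comb a n u * Dx_poly d (fpoly a n) + v * pderiv (fpoly a n)) (a j) = 0"
      unfolding eq using poly_fpoly_root[OF j] by simp
    hence "?e * (poly v (a j) - u j * Dx d (a j) * ?e) = 0"
      unfolding Dx_poly_fpoly pderiv_fpoly by (simp add: poly_comb_root[OF j] algebra_simps)
    hence "poly v (a j) = u j * Dx d (a j) * ?e" using poly_eps_own_root[OF dist j] by simp
    thus "poly v x = poly (comb a n (\<lambda>k. u k * Dx d (a k))) x"
      unfolding x poly_comb_root[OF j] by simp
  next
    have "card (a ` {..<n}) = n"
      using dist by (subst card_image) (auto simp: inj_on_def)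
    thus "degree v < card (a ` {..<n})" "degree (comb a n (\<lambda>k. u k * Dx d (a k))) < card (a ` {..<n})"
      using sol degree_comb[OF n] by (auto simp: isSol_def)
  qed
  have "fpoly a n * cross_term d a n u = comb a n u * Dx_poly d (fpoly a n) + v * pderiv (fpoly a n)"
    using Dx_poly_fpoly_pderiv_eq_cross_term[of a n u d] unfolding v[symmetric] by simp
  also have "\<dots> = fpoly a n * comb a n w"
    using eq by (simp only: mult.commute)
  finally have "comb a n (laplacian n (dlog_diff d a) u) = comb a n w"
    by (simp add: fpoly_neq_0 cross_term_eq_comb_laplacian[OF dist])
  hence "\<forall>j<n. laplacian n (dlog_diff d a) u j = w j"
    using comb_inj[OF dist] by blast
  with sol v show "(\<forall>i. n \<le> i \<longrightarrow> u i = 0) \<and> (\<Sum>i<n. u i) = 0 \<and>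
      (\<forall>j<n. laplacian n (dlog_diff d a) u j = w j) \<and> v = comb a n (\<lambda>k. u k * Dx d (a k))"
    by (simp add: isSol_def)
next
  assume sol: "(\<forall>i. n \<le> i \<longrightarrow> u i = 0) \<and> (\<Sum>i<n. u i) = 0 \<and>
    (\<forall>j<n. laplacian n (dlog_diff d a) u j = w j) \<and> v = comb a n (\<lambda>k. u k * Dx d (a k))"
  hence "cross_term d a n u = comb a n w"
    unfolding cross_term_eq_comb_laplacian[OF dist] by (intro comb_cong) simp
  with sol show "isSol d a n w u v"
    using Dx_poly_fpoly_pderiv_eq_cross_term[of a n u d] degree_comb[OF n]
    by (simp add: isSol_def mult.commute)
qed

lemma sum_Amat_eq_laplacian:
  assumes i: "i < n"
  shows "(\<Sum>j<n. of_rat (Amat d a n i j) * V j) = laplacian n (\<lambda>j k. of_rat (nu d (a j - a k))) V i"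
proof -
  let ?m = "\<lambda>k. (of_rat (nu d (a i - a k)) :: 'a)"
  have "(\<Sum>j<n. of_rat (Amat d a n i j) * V j)
      = of_rat (Amat d a n i i) * V i + (\<Sum>j\<in>{..<n} - {i}. of_rat (Amat d a n i j) * V j)"
    using i by (subst sum.remove[of _ i]) auto
  also have "of_rat (Amat d a n i i) * V i = (\<Sum>k\<in>{..<n} - {i}. ?m k * V i)"
    by (simp add: Amat_def of_rat_sum sum_distrib_right)
  also have "(\<Sum>j\<in>{..<n} - {i}. of_rat (Amat d a n i j) * V j) = (\<Sum>k\<in>{..<n} - {i}. - (?m k * V k))"
    by (intro sum.cong) (auto simp: Amat_def of_rat_minus)
  also have "(\<Sum>k\<in>{..<n} - {i}. ?m k * V i) + (\<Sum>k\<in>{..<n} - {i}. - (?m k * V k))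
      = (\<Sum>k\<in>{..<n} - {i}. ?m k * (V i - V k))"
    by (simp add: sum.distrib[symmetric] right_diff_distrib)
  also have "\<dots> = laplacian n (\<lambda>j k. of_rat (nu d (a j - a k))) V i"
    using i by (simp add: laplacian_def sum.remove[of _ i])
  finally show ?thesis .
qed

lemma of_real_of_rat: "of_real (of_rat q) = (of_rat q :: 'a::{real_field, field_char_0})"
  by (cases q) (simp add: of_rat_rat)

section \<open>Roots of positive valuation\<close>

locale positive_valuation_roots =
  fixes d n :: nat and a :: "nat \<Rightarrow> complex fls"
  assumes d_pos: "d > 0" and n_pos: "n > 0"
    and distinct: "\<forall>i<n. \<forall>j<n. i \<noteq> j \<longrightarrow> a i \<noteq> a j"
    and nu_pos: "\<forall>i<n. a i \<noteq> 0 \<longrightarrow> nu d (a i) > 0"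
begin

lemma nu_diff_pos:
  assumes "j < n" "k < n" "j \<noteq> k"
  shows "nu d (a j - a k) > 0"
proof -
  have "vanishes_below 1 (a i)" if "i < n" for i
  proof (cases "a i = 0")
    case False
    with nu_pos that d_pos have "fls_subdegree (a i) > 0"
      by (auto simp: nu_def zero_less_divide_iff)
    with False show ?thesis by (simp add: vanishes_below_iff_le_subdegree)
  qed simp
  with assms have "vanishes_below 1 (a j - a k)" by (simp add: vanishes_below_diff)
  moreover have "a j - a k \<noteq> 0" using distinct assms by auto
  ultimately show ?thesis
    using d_pos by (simp add: vanishes_below_iff_le_subdegree nu_def zero_less_divide_iff)
qed

lemma laplacian_inj_nu: "laplacian_inj n (\<lambda>j k. of_rat (nu d (a j - a k)) :: complex)"
  using laplacian_inj_pos_weights[of n "\<lambda>j k. of_rat (nu d (a j - a k))"] nu_diff_pos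
  by (simp add: of_real_of_rat)

lemma x_dlog_diff_leading:
  "\<forall>j<n. \<forall>k<n. vanishes_below 1
     (fls_X_intpow (int d) * dlog_diff d a j k - fls_const (of_rat (nu d (a j - a k))))"
proof (intro allI impI)
  fix j k assume "j < n" "k < n"
  show "vanishes_below 1 (fls_X_intpow (int d) * dlog_diff d a j k - fls_const (of_rat (nu d (a j - a k))))"
  proof (cases "j = k")
    case True thus ?thesis by (simp add: dlog_diff_def nu_def)
  next
    case False
    with distinct \<open>j < n\<close> \<open>k < n\<close> have "a j - a k \<noteq> 0" by auto
    moreover have "dlog_diff d a j k = Dx d (a j - a k) / (a j - a k)"
      by (simp add: dlog_diff_def Dx_diff)
    ultimately show ?thesis using x_log_deriv_leading[OF d_pos] by simp
  qed
qed

lemma laplacian_x_dlog_diff: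
  "laplacian n (\<lambda>j k. fls_X_intpow (int d) * dlog_diff d a j k) c j
     = fls_X_intpow (int d) * laplacian n (dlog_diff d a) c j"
  by (simp add: laplacian_def sum_distrib_left mult.assoc)

lemma laplacian_inj_dlog_diff: "laplacian_inj n (dlog_diff d a)"
proof -
  have inj: "laplacian_inj n (\<lambda>j k. fls_X_intpow (int d) * dlog_diff d a j k)"
    by (rule laplacian_inj_of_leading[OF x_dlog_diff_leading laplacian_inj_nu])
  show ?thesis
    unfolding laplacian_inj_def
  proof (intro allI impI)
    fix c j assume "(\<Sum>k<n. c k) = 0" "\<forall>j<n. laplacian n (dlog_diff d a) c j = 0" "j < n"
    then show "c j = 0"
      using laplacian_injD[OF inj] by (simp add: laplacian_x_dlog_diff)
  qed
qed

lemma nabla_eq: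
  assumes supp: "\<forall>i. n \<le> i \<longrightarrow> u i = 0" and sum_u: "(\<Sum>i<n. u i) = 0"
    and lap: "\<forall>j<n. laplacian n (dlog_diff d a) u j = w j"
  shows "nabla d a n w = (\<lambda>j. if j < n then - Dx d (u j) - w j else 0)"
proof -
  define v where "v = comb a n (\<lambda>k. u k * Dx d (a k))"
  have sol_iff: "isSol d a n w u' v' \<longleftrightarrow> u' = u \<and> v' = v" for u' v'
  proof -
    have "u' = u"
      if "\<forall>i. n \<le> i \<longrightarrow> u' i = 0" "(\<Sum>i<n. u' i) = 0" "\<forall>j<n. laplacian n (dlog_diff d a) u' j = w j"
      using that supp sum_u lap laplacian_inj_unique[OF laplacian_inj_dlog_diff, of u' u]
      by (metis not_le ext)
    thus ?thesis using supp sum_u lap by (auto simp: isSol_iff[OF distinct n_pos] v_def)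
  qed
  hence "(THE uv. isSol d a n w (fst uv) (snd uv)) = (u, v)"
    by (intro the_equality) auto
  moreover have "- Dx_poly d (comb a n u) - pderiv v = comb a n (\<lambda>j. - Dx d (u j) - w j)"
  proof -
    have "- Dx_poly d (comb a n u) - pderiv v = - (comb a n (\<lambda>j. Dx d (u j)) + cross_term d a n u)"
      unfolding v_def Dx_poly_comb_plus_pderiv[symmetric] by simp
    also have "cross_term d a n u = comb a n w"
      unfolding cross_term_eq_comb_laplacian[OF distinct] using lap by (intro comb_cong) simp
    finally show ?thesis by (simp add: comb_add comb_minus)
  qed
  moreover have "comb a n (\<lambda>j. - Dx d (u j) - w j) = comb a n (\<lambda>j. if j < n then - Dx d (u j) - w j else 0)"
    by (rule comb_cong) simp
  ultimately show ?thesis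
    unfolding nabla_def by (simp add: coords_comb[OF distinct])
qed

lemma laplacian_dlog_diff_solvable:
  assumes "(\<Sum>j<n. w j) = 0"
  obtains u where "\<forall>i. n \<le> i \<longrightarrow> u i = 0" "(\<Sum>i<n. u i) = 0"
    "\<forall>j<n. laplacian n (dlog_diff d a) u j = w j"
  using laplacian_surj[of "dlog_diff d a", OF dlog_diff_sym n_pos laplacian_inj_dlog_diff assms]
  by blast

lemma solution_vanishes_below:
  assumes sum_u: "(\<Sum>i<n. u i) = 0" and lap: "\<forall>j<n. laplacian n (dlog_diff d a) u j = w j"
    and w: "\<forall>j<n. vanishes_below R (w j)"
  shows "\<forall>k<n. vanishes_below (R + int d) (u k)"
proof (rule laplacian_vanishes_below[OF x_dlog_diff_leading laplacian_inj_nu sum_u])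
  show "\<forall>j<n. vanishes_below (R + int d) (laplacian n (\<lambda>j k. fls_X_intpow (int d) * dlog_diff d a j k) u j)"
    using lap w by (simp add: laplacian_x_dlog_diff vanishes_below_def fls_nth_X_intpow_mult)
qed

lemma AFinv_eqI:
  assumes "\<forall>i. n \<le> i \<longrightarrow> V i = 0" "(\<Sum>i<n. V i) = 0"
    and "\<forall>i<n. laplacian n (\<lambda>j k. of_rat (nu d (a j - a k))) V i = W i"
  shows "AFinv d a n W = V"
  unfolding AFinv_def
proof (rule the_equality)
  show "(\<forall>i. n \<le> i \<longrightarrow> V i = 0) \<and> (\<Sum>i<n. V i) = 0 \<and>
      (\<forall>i<n. (\<Sum>j<n. of_rat (Amat d a n i j) * V j) = W i)"
    using assms by (simp add: sum_Amat_eq_laplacian)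
next
  fix V' assume "(\<forall>i. n \<le> i \<longrightarrow> V' i = 0) \<and> (\<Sum>i<n. V' i) = 0 \<and>
      (\<forall>i<n. (\<Sum>j<n. of_rat (Amat d a n i j) * V' j) = W i)"
  with assms show "V' = V"
    using laplacian_inj_unique[OF laplacian_inj_nu, of V' V]
    by (simp add: sum_Amat_eq_laplacian) (metis not_le ext)
qed

text \<open>
  On the \<open>(R + d)\<close>-th coefficients, i.e. the coefficients of \<open>x\<^sup>r\<^sup>+\<^sup>1\<close>, the system for \<open>u\<close>
  is exactly \<open>A V = in\<^sub>r(w)\<close>.
\<close>

lemma AFinv_in_r:
  assumes sum_u: "(\<Sum>i<n. u i) = 0" and lap: "\<forall>j<n. laplacian n (dlog_diff d a) u j = w j"
    and w: "\<forall>j<n. vanishes_below R (w j)" and R: "r * of_nat d = of_int R"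
  shows "AFinv d a n (in_r d n r w) = (\<lambda>k. if k < n then fls_nth (u k) (R + int d) else 0)"
proof (rule AFinv_eqI)
  have xcoeff_R: "xcoeff d r g = fls_nth g R" for g
    using R by (simp add: xcoeff_def)
  show "(\<Sum>i<n. if i < n then fls_nth (u i) (R + int d) else 0) = 0"
    using sum_u by (simp flip: fls_nth_sum)
  show "\<forall>j<n. laplacian n (\<lambda>j k. of_rat (nu d (a j - a k)))
      (\<lambda>k. if k < n then fls_nth (u k) (R + int d) else 0) j = in_r d n r w j"
  proof (intro allI impI)
    fix j assume j: "j < n"
    have "laplacian n (\<lambda>j k. of_rat (nu d (a j - a k))) (\<lambda>k. if k < n then fls_nth (u k) (R + int d) else 0) j
        = laplacian n (\<lambda>j k. of_rat (nu d (a j - a k))) (\<lambda>k. fls_nth (u k) (R + int d)) j"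
      using j by (simp add: laplacian_def)
    also have "\<dots> = fls_nth (laplacian n (\<lambda>j k. fls_X_intpow (int d) * dlog_diff d a j k) u j) (R + int d)"
      using nth_laplacian_leading[OF x_dlog_diff_leading solution_vanishes_below[OF sum_u lap w] j] ..
    also have "\<dots> = in_r d n r w j"
      using lap j by (simp add: laplacian_x_dlog_diff fls_nth_X_intpow_mult in_r_def xcoeff_R)
    finally show "laplacian n (\<lambda>j k. of_rat (nu d (a j - a k)))
        (\<lambda>k. if k < n then fls_nth (u k) (R + int d) else 0) j = in_r d n r w j" .
  qed
qed simp

lemma inFr_neg_Dx_minus:
  assumes wF: "inFr d n r w" and sum_u: "(\<Sum>i<n. u i) = 0"
    and lap: "\<forall>j<n. laplacian n (dlog_diff d a) u j = w j"
  shows "inFr d n r (\<lambda>j. if j < n then - Dx d (u j) - w j else 0)"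
proof -
  let ?R = "\<lceil>r * of_nat d\<rceil>"
  have sum_w: "(\<Sum>j<n. w j) = 0" and w: "\<forall>j<n. vanishes_below ?R (w j)"
    using wF by (simp_all add: inFr_iff_vanishes_below[OF d_pos])
  have "\<forall>k<n. vanishes_below (?R + int d) (u k)"
    by (rule solution_vanishes_below[OF sum_u lap w])
  with w have "\<forall>j<n. vanishes_below ?R (- Dx d (u j) - w j)"
    by (intro allI impI vanishes_below_diff vanishes_below_uminus vanishes_below_Dx) auto
  moreover have "(\<Sum>j<n. - Dx d (u j) - w j) = 0"
    using sum_u sum_w by (simp add: sum_subtractf sum_negf flip: Dx_sum)
  ultimately show ?thesis by (simp add: inFr_iff_vanishes_below[OF d_pos])
qed

lemma in_r_neg_Dx_minus:
  assumes wF: "inFr d n r w" and sum_u: "(\<Sum>i<n. u i) = 0"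
    and lap: "\<forall>j<n. laplacian n (dlog_diff d a) u j = w j" and i: "i < n"
  shows "in_r d n r (\<lambda>j. if j < n then - Dx d (u j) - w j else 0) i
           = - in_r d n r w i - (1 + of_rat r) * AFinv d a n (in_r d n r w) i"
proof (cases "of_int \<lfloor>r * of_nat d\<rfloor> = r * of_nat d")
  case False
  hence "in_r d n r c = (\<lambda>_. 0)" for c by (simp add: in_r_def xcoeff_def fun_eq_iff)
  moreover have "AFinv d a n (\<lambda>_. 0) = (\<lambda>_. 0)"
    by (rule AFinv_eqI) (simp_all add: laplacian_def)
  ultimately show ?thesis by simp
next
  case True
  define R where "R = \<lfloor>r * of_nat d\<rfloor>"
  have R: "r * of_nat d = of_int R" using True unfolding R_def by (rule sym)
  hence "\<lceil>r * of_nat d\<rceil> = R" by simp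
  with wF have w: "\<forall>j<n. vanishes_below R (w j)"
    by (simp add: inFr_iff_vanishes_below[OF d_pos])
  have xcoeff_R: "xcoeff d r g = fls_nth g R" for g
    using R by (simp add: xcoeff_def)
  text \<open>Differentiation multiplies the coefficient of \<open>x\<^sup>r\<^sup>+\<^sup>1\<close> by \<open>(R + d) / d = 1 + r\<close>.\<close>
  have "(1 + of_rat r :: complex) = of_int (R + int d) / of_nat d"
  proof -
    have "r = of_int R / of_nat d" using R d_pos by (simp add: eq_divide_eq)
    hence "(of_rat r :: complex) = of_int R / of_nat d" by (simp add: of_rat_divide)
    thus ?thesis using d_pos by (simp add: field_simps)
  qed
  moreover have "AFinv d a n (in_r d n r w) i = fls_nth (u i) (R + int d)"
    using AFinv_in_r[OF sum_u lap w R] i by simp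
  ultimately show ?thesis
    using i by (simp add: in_r_def xcoeff_R Dx_nth)
qed

end

theorem mainTheorem12:
  fixes d n :: nat and a :: "nat \<Rightarrow> complex fls" and r :: rat and w :: "nat \<Rightarrow> complex fls"
  assumes "d > 0" and "n \<ge> 2"
    and "\<forall>i<n. \<forall>j<n. i \<noteq> j \<longrightarrow> a i \<noteq> a j"
    and "\<forall>i<n. a i \<noteq> 0 \<longrightarrow> nu d (a i) > 0"
    and "inFr d n r w"
  shows "inFr d n r (nabla d a n w) \<and>
         (\<forall>i<n. in_r d n r (nabla d a n w) i =
            - in_r d n r w i - (1 + of_rat r) * AFinv d a n (in_r d n r w) i)"
proof -
  interpret positive_valuation_roots d n a
    using assms(1-4) by unfold_locales auto
  obtain u where u: "\<forall>i. n \<le> i \<longrightarrow> u i = 0" "(\<Sum>i<n. u i) = 0"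
    "\<forall>j<n. laplacian n (dlog_diff d a) u j = w j"
    using laplacian_dlog_diff_solvable assms(5) by (auto simp: inFr_def)
  show ?thesis
    unfolding nabla_eq[OF u]
    using inFr_neg_Dx_minus[OF assms(5) u(2,3)] in_r_neg_Dx_minus[OF assms(5) u(2,3)] by blast
qed

end
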